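(* Let $X$ be a compact metrizable space and $\Delta$ a weak*-closed set of Borel probability measures on $X$. The C*-algebra $\ell^\infty(\mathrm{C}(X))/J_{2,\omega,\Delta}$ has real rank zero if and only if its invertible self-adjoint elements are dense in the set of its self-adjoint elements with respect to $\|\cdot\|_{2,\omega,\Delta}$.
   Context: Measures act as traces $\tau_\mu(h)=\int h\,d\mu$. $\omega$ is a free ultrafilter on $\mathbb N$; $J_{2,\omega,\Delta}=\{(f_n)\in\ell^\infty(\mathrm{C}(X)):\lim_{n\to\omega}\sup_{\tau\in\Delta}\tau(|f_n|^2)=0\}$; $\|(a_n)\|_{2,\omega,\Delta}=\lim_{n\to\omega}\sup_{\tau\in\Delta}\tau(|a_n|^2)$, well defined on the quotient. Real rank zero means the invertible self-adjoint elements are norm-dense in the self-adjoint elements. *)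

theory Defs
  imports "HOL-Analysis.Analysis" "HOL-Probability.Probability"
begin

definition free_ultrafilter :: "nat filter \<Rightarrow> bool" where
  "free_ultrafilter F \<longleftrightarrow> F \<noteq> bot
     \<and> (\<forall>P. eventually P F \<or> eventually (\<lambda>n. \<not> P n) F)
     \<and> (\<forall>m. eventually (\<lambda>n. n \<noteq> m) F)"

text \<open>Borel probability measures on the (compact metric) space X = UNIV.\<close>
definition borel_prob :: "'a::topological_space measure \<Rightarrow> bool" where
  "borel_prob \<mu> \<longleftrightarrow> prob_space \<mu> \<and> sets \<mu> = sets borel"

text \<open>Closedness in the weak* topology (generated by integration against
  continuous functions), via basic weak* neighbourhoods.\<close>
definition weak_star_closed :: "'a::topological_space measure set \<Rightarrow> bool" where
  "weak_star_closed \<Delta> \<longleftrightarrow>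
     (\<forall>\<mu>. borel_prob \<mu> \<and>
        (\<forall>H \<epsilon>. finite H \<and> (\<forall>h\<in>H. continuous_on UNIV (h :: 'a \<Rightarrow> real)) \<and> \<epsilon> > 0 \<longrightarrow>
           (\<exists>\<nu>\<in>\<Delta>. \<forall>h\<in>H. \<bar>(\<integral>t. h t \<partial>\<mu>) - (\<integral>t. h t \<partial>\<nu>)\<bar> < \<epsilon>))
        \<longrightarrow> \<mu> \<in> \<Delta>)"

text \<open>The C*-algebra \<open>\<ell>\<^sup>\<infinity>(C(X))\<close>: uniformly bounded sequences of continuous
  complex functions, with pointwise operations.\<close>
definition linf_CX :: "(nat \<Rightarrow> 'a::topological_space \<Rightarrow> complex) set" where
  "linf_CX = {f. (\<forall>n. continuous_on UNIV (f n)) \<and> (\<exists>B. \<forall>n t. cmod (f n t) \<le> B)}"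

definition sup_norm :: "(nat \<Rightarrow> 'a \<Rightarrow> complex) \<Rightarrow> real" where
  "sup_norm f = (SUP p\<in>UNIV. cmod (f (fst p) (snd p)))"

text \<open>\<open>sup_{\<tau>\<in>\<Delta>} \<tau>(|g|\<^sup>2)\<close> (valued in ennreal so that the empty supremum is 0).\<close>
definition tau_sup2 :: "'a::topological_space measure set \<Rightarrow> ('a \<Rightarrow> complex) \<Rightarrow> ennreal" where
  "tau_sup2 \<Delta> g = (SUP \<tau>\<in>\<Delta>. \<integral>\<^sup>+ t. ennreal ((cmod (g t))\<^sup>2) \<partial>\<tau>)"

definition J2 :: "nat filter \<Rightarrow> 'a::topological_space measure set \<Rightarrow> (nat \<Rightarrow> 'a \<Rightarrow> complex) set" where
  "J2 \<omega> \<Delta> = {f \<in> linf_CX. ((\<lambda>n. tau_sup2 \<Delta> (f n)) \<longlongrightarrow> 0) \<omega>}"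

definition norm2 :: "nat filter \<Rightarrow> 'a::topological_space measure set \<Rightarrow> (nat \<Rightarrow> 'a \<Rightarrow> complex) \<Rightarrow> ennreal" where
  "norm2 \<omega> \<Delta> a = Lim \<omega> (\<lambda>n. tau_sup2 \<Delta> (a n))"

text \<open>Quotient C*-algebra \<open>\<ell>\<^sup>\<infinity>(C(X))/J\<close>, described through representatives.\<close>
definition q_norm :: "nat filter \<Rightarrow> 'a::topological_space measure set \<Rightarrow> (nat \<Rightarrow> 'a \<Rightarrow> complex) \<Rightarrow> real" where
  "q_norm \<omega> \<Delta> a = Inf {sup_norm (\<lambda>n t. a n t + j n t) | j. j \<in> J2 \<omega> \<Delta>}"

definition q_selfadjoint :: "nat filter \<Rightarrow> 'a::topological_space measure set \<Rightarrow> (nat \<Rightarrow> 'a \<Rightarrow> complex) \<Rightarrow> bool" where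
  "q_selfadjoint \<omega> \<Delta> a \<longleftrightarrow> (\<lambda>n t. a n t - cnj (a n t)) \<in> J2 \<omega> \<Delta>"

definition q_invertible :: "nat filter \<Rightarrow> 'a::topological_space measure set \<Rightarrow> (nat \<Rightarrow> 'a \<Rightarrow> complex) \<Rightarrow> bool" where
  "q_invertible \<omega> \<Delta> a \<longleftrightarrow> (\<exists>b\<in>linf_CX.
      (\<lambda>n t. a n t * b n t - 1) \<in> J2 \<omega> \<Delta> \<and> (\<lambda>n t. b n t * a n t - 1) \<in> J2 \<omega> \<Delta>)"

definition q_real_rank_zero :: "nat filter \<Rightarrow> 'a::topological_space measure set \<Rightarrow> bool" where
  "q_real_rank_zero \<omega> \<Delta> \<longleftrightarrow>
     (\<forall>x\<in>linf_CX. q_selfadjoint \<omega> \<Delta> x \<longrightarrow>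
        (\<forall>\<epsilon>>0. \<exists>y\<in>linf_CX. q_selfadjoint \<omega> \<Delta> y \<and> q_invertible \<omega> \<Delta> y \<and>
            q_norm \<omega> \<Delta> (\<lambda>n t. x n t - y n t) < \<epsilon>))"

definition q_sa_inv_dense_norm2 :: "nat filter \<Rightarrow> 'a::topological_space measure set \<Rightarrow> bool" where
  "q_sa_inv_dense_norm2 \<omega> \<Delta> \<longleftrightarrow>
     (\<forall>x\<in>linf_CX. q_selfadjoint \<omega> \<Delta> x \<longrightarrow>
        (\<forall>\<epsilon>>0. \<exists>y\<in>linf_CX. q_selfadjoint \<omega> \<Delta> y \<and> q_invertible \<omega> \<Delta> y \<and>
            norm2 \<omega> \<Delta> (\<lambda>n t. x n t - y n t) < \<epsilon>))"

end

theory Submission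
  imports Defs
begin

text \<open>The quotient norm dominates the 2-norm: if \<open>\<parallel>a + j\<parallel>\<^sub>\<infinity> < s\<close> with \<open>j \<in> J\<close>, then
  \<open>sup\<^sub>\<tau> \<tau>(\<bar>a\<^sub>n\<bar>\<^sup>2) \<le> 2s\<^sup>2 + 2 sup\<^sub>\<tau> \<tau>(\<bar>j\<^sub>n\<bar>\<^sup>2) \<rightarrow> 2s\<^sup>2\<close>, which gives the easy direction.

  Conversely, let \<open>x\<close> be self-adjoint and \<open>y\<close> self-adjoint, invertible modulo \<open>J\<close> with
  inverse \<open>b\<close>, and 2-close to \<open>x\<close>. Moving \<open>Re x\<close> by at most \<open>e\<close> towards the sign of \<open>Re y\<close>
  gives a real function \<open>R\<close> that is uniformly \<open>e\<close>-close to \<open>x\<close> modulo \<open>J\<close>. Its truncated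
  inverse \<open>R / max R\<^sup>2 (e/2)\<^sup>2\<close> inverts \<open>R\<close> where \<open>\<bar>R\<bar> \<ge> e/2\<close>; where \<open>\<bar>R\<bar> < e/2\<close>, either \<open>x\<close>
  is far from \<open>y\<close>, or \<open>y\<close> is far from self-adjoint, or \<open>\<bar>y\<bar>\<close> is so small that \<open>y b\<close> is far
  from 1. Hence the defect of this inverse is 2-small. A diagonal argument along the free
  ultrafilter \<open>\<omega>\<close> turns approximations with defects tending to 0 into an element that is
  invertible modulo \<open>J\<close>.\<close>

lemma tendsto_Limsup_ultrafilter:
  fixes f :: "'i \<Rightarrow> 'b::{complete_linorder, linorder_topology}"
  assumes "\<And>P. eventually P F \<or> eventually (\<lambda>n. \<not> P n) F"
  shows "(f \<longlongrightarrow> Limsup F f) F"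
proof (rule order_tendstoI)
  fix a assume "a < Limsup F f"
  then have "\<not> eventually (\<lambda>n. f n \<le> a) F"
    using Limsup_bounded leD by blast
  then show "eventually (\<lambda>n. a < f n) F"
    using assms[of "\<lambda>n. f n \<le> a"] by (simp add: not_le)
next
  fix a assume "Limsup F f < a"
  then show "eventually (\<lambda>n. f n < a) F" by (rule Limsup_lessD)
qed

lemma free_ultrafilter_le_sequentially:
  assumes "free_ultrafilter \<omega>"
  shows "\<omega> \<le> sequentially"
  unfolding le_sequentially
proof
  fix N
  have "eventually (\<lambda>n. \<forall>m\<in>{..<N}. n \<noteq> m) \<omega>"
    using assms by (intro eventually_ball_finite) (auto simp: free_ultrafilter_def)
  then show "eventually (\<lambda>n. N \<le> n) \<omega>"
    by eventually_elim (auto simp: not_less[symmetric])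
qed

lemma diagonal_tendsto_zero:
  fixes M :: "nat \<Rightarrow> nat \<Rightarrow> ennreal" and \<epsilon> :: "nat \<Rightarrow> ennreal"
  assumes "F \<le> sequentially" and "\<epsilon> \<longlonglongrightarrow> 0"
    and "\<And>k. eventually (\<lambda>n. M k n \<le> \<epsilon> k) F"
  obtains kk where "((\<lambda>n. M (kk n) n) \<longlongrightarrow> 0) F"
proof
  define good where "good n k \<longleftrightarrow> k \<le> n \<and> (\<forall>i\<le>k. M i n \<le> \<epsilon> i)" for n k
  show "((\<lambda>n. M (GREATEST k. good n k) n) \<longlongrightarrow> 0) F"
  proof (rule order_tendstoI)
    fix e :: ennreal assume "0 < e"
    then obtain K where K: "\<And>k. K \<le> k \<Longrightarrow> \<epsilon> k < e"
      using order_tendstoD(2)[OF assms(2)] by (auto simp: eventually_sequentially)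
    have "eventually (\<lambda>n. K \<le> n) F"
      using assms(1) by (simp add: le_sequentially)
    moreover have "eventually (\<lambda>n. \<forall>i\<in>{..K}. M i n \<le> \<epsilon> i) F"
      using assms(3) by (intro eventually_ball_finite) auto
    ultimately show "eventually (\<lambda>n. M (GREATEST k. good n k) n < e) F"
    proof eventually_elim
      case (elim n)
      then have "good n K" by (auto simp: good_def)
      moreover have "\<And>k. good n k \<Longrightarrow> k \<le> n" by (simp add: good_def)
      ultimately have "good n (GREATEST k. good n k)" "K \<le> (GREATEST k. good n k)"
        by (blast intro: GreatestI_nat Greatest_le_nat)+
      then show ?case
        using K by (auto simp: good_def intro: order.strict_trans1)
    qed
  qed simp
qed

lemma tendsto_norm2:
  assumes "free_ultrafilter \<omega>"
  shows "((\<lambda>n. tau_sup2 \<Delta> (a n)) \<longlongrightarrow> norm2 \<omega> \<Delta> a) \<omega>"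
  using tendsto_Limsup_ultrafilter[of \<omega>] assms
  unfolding norm2_def free_ultrafilter_def by (metis tendsto_Lim)

section \<open>Suprema of integrals over \<open>\<Delta>\<close>\<close>

definition sup_integral :: "'a measure set \<Rightarrow> ('a \<Rightarrow> real) \<Rightarrow> ennreal" where
  "sup_integral \<Delta> h = (SUP \<tau>\<in>\<Delta>. \<integral>\<^sup>+ t. ennreal (h t) \<partial>\<tau>)"

lemma tau_sup2_eq_sup_integral: "tau_sup2 \<Delta> g = sup_integral \<Delta> (\<lambda>t. (cmod (g t))\<^sup>2)"
  by (simp add: tau_sup2_def sup_integral_def)

lemma borel_prob_measurable_ennreal:
  fixes h :: "'a::topological_space \<Rightarrow> real"
  assumes "borel_prob \<mu>" "continuous_on UNIV h"
  shows "(\<lambda>t. ennreal (h t)) \<in> borel_measurable \<mu>"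
proof -
  have "(\<lambda>t. ennreal (h t)) \<in> borel_measurable borel"
    using measurable_compose[OF borel_measurable_continuous_onI[OF assms(2)] measurable_ennreal]
    by (simp add: o_def)
  moreover have "borel_measurable \<mu> = borel_measurable borel"
    using assms(1) by (intro measurable_cong_sets) (simp_all add: borel_prob_def)
  ultimately show ?thesis by metis
qed

lemma sup_integral_mono:
  "(\<And>t. h t \<le> k t) \<Longrightarrow> sup_integral \<Delta> h \<le> sup_integral \<Delta> k"
  unfolding sup_integral_def by (intro SUP_mono' nn_integral_mono ennreal_leI)

lemma sup_integral_add:
  fixes h k :: "'a::topological_space \<Rightarrow> real"
  assumes "\<forall>\<mu>\<in>\<Delta>. borel_prob \<mu>" "continuous_on UNIV h" "continuous_on UNIV k"
    and "\<And>t. 0 \<le> h t" "\<And>t. 0 \<le> k t"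
  shows "sup_integral \<Delta> (\<lambda>t. h t + k t) \<le> sup_integral \<Delta> h + sup_integral \<Delta> k"
  unfolding sup_integral_def
proof (rule SUP_least)
  fix \<tau> assume \<tau>: "\<tau> \<in> \<Delta>"
  have "(\<integral>\<^sup>+ t. ennreal (h t + k t) \<partial>\<tau>) = (\<integral>\<^sup>+ t. ennreal (h t) + ennreal (k t) \<partial>\<tau>)"
    using assms(4,5) by simp
  also have "\<dots> = (\<integral>\<^sup>+ t. ennreal (h t) \<partial>\<tau>) + (\<integral>\<^sup>+ t. ennreal (k t) \<partial>\<tau>)"
    using \<tau> assms(1-3) by (intro nn_integral_add borel_prob_measurable_ennreal) auto
  also have "\<dots> \<le> (SUP \<tau>\<in>\<Delta>. \<integral>\<^sup>+ t. ennreal (h t) \<partial>\<tau>) + (SUP \<tau>\<in>\<Delta>. \<integral>\<^sup>+ t. ennreal (k t) \<partial>\<tau>)"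
    using \<tau> by (intro add_mono SUP_upper)
  finally show "(\<integral>\<^sup>+ t. ennreal (h t + k t) \<partial>\<tau>) \<le> \<dots>" .
qed

lemma sup_integral_cmult:
  fixes h :: "'a::topological_space \<Rightarrow> real"
  assumes "\<forall>\<mu>\<in>\<Delta>. borel_prob \<mu>" "continuous_on UNIV h" "0 \<le> c"
  shows "sup_integral \<Delta> (\<lambda>t. c * h t) = ennreal c * sup_integral \<Delta> h"
  unfolding sup_integral_def SUP_mult_left_ennreal
  using assms by (intro SUP_cong) (simp_all add: ennreal_mult' nn_integral_cmult borel_prob_measurable_ennreal)

lemma sup_integral_const_le:
  assumes "\<forall>\<mu>\<in>\<Delta>. borel_prob \<mu>"
  shows "sup_integral \<Delta> (\<lambda>t. c) \<le> ennreal c"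
  unfolding sup_integral_def
  using assms by (intro SUP_least) (simp add: borel_prob_def prob_space.emeasure_space_1)

section \<open>Sequences modulo \<open>J\<close>\<close>

lemma linf_CXI:
  "(\<And>n t. cmod (f n t) \<le> B) \<Longrightarrow> (\<And>n. continuous_on UNIV (f n)) \<Longrightarrow> f \<in> linf_CX"
  unfolding linf_CX_def by blast

lemma linf_CX_continuous: "f \<in> linf_CX \<Longrightarrow> continuous_on UNIV (f n)"
  by (simp add: linf_CX_def)

lemma linf_CX_add:
  assumes "f \<in> linf_CX" "g \<in> linf_CX"
  shows "(\<lambda>n t. f n t + g n t) \<in> linf_CX"
proof -
  obtain A B where "\<And>n t. cmod (f n t) \<le> A" "\<And>n t. cmod (g n t) \<le> B"
    using assms by (auto simp: linf_CX_def)
  then have "cmod (f n t + g n t) \<le> A + B" for n t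
    by (meson add_mono norm_triangle_ineq order_trans)
  moreover have "continuous_on UNIV (\<lambda>t. f n t + g n t)" for n
    using assms by (intro continuous_intros linf_CX_continuous)
  ultimately show ?thesis by (rule linf_CXI)
qed

lemma linf_CX_diff:
  assumes "f \<in> linf_CX" "g \<in> linf_CX"
  shows "(\<lambda>n t. f n t - g n t) \<in> linf_CX"
proof -
  have "(\<lambda>n t. - g n t) \<in> linf_CX"
    using assms(2) by (simp add: linf_CX_def continuous_on_minus)
  from linf_CX_add[OF assms(1) this] show ?thesis by simp
qed

lemma sup_norm_upper: "f \<in> linf_CX \<Longrightarrow> cmod (f n t) \<le> sup_norm f"
  unfolding sup_norm_def linf_CX_def
  by (auto intro!: cSUP_upper2[where x="(n, t)"] bdd_aboveI2)

lemma sup_norm_least: "(\<And>n t. cmod (f n t) \<le> c) \<Longrightarrow> sup_norm f \<le> c"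
  unfolding sup_norm_def by (rule cSUP_least) auto

lemma J2_zero: "(\<lambda>n t. 0) \<in> J2 \<omega> \<Delta>"
proof -
  have "tau_sup2 \<Delta> (\<lambda>t. 0) = 0"
    by (cases "\<Delta> = {}") (simp_all add: tau_sup2_def bot_ennreal)
  then show ?thesis
    by (auto simp: J2_def linf_CX_def)
qed

lemma J2_dominated:
  assumes "f \<in> linf_CX" "g \<in> J2 \<omega> \<Delta>" "\<And>n. tau_sup2 \<Delta> (f n) \<le> ennreal c * tau_sup2 \<Delta> (g n)"
  shows "f \<in> J2 \<omega> \<Delta>"
proof -
  have "((\<lambda>n. ennreal c * tau_sup2 \<Delta> (g n)) \<longlongrightarrow> ennreal c * 0) \<omega>"
    using assms(2) by (intro ennreal_tendsto_cmult) (simp_all add: J2_def)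
  then have lim: "((\<lambda>n. ennreal c * tau_sup2 \<Delta> (g n)) \<longlongrightarrow> 0) \<omega>"
    by simp
  have "((\<lambda>n. tau_sup2 \<Delta> (f n)) \<longlongrightarrow> 0) \<omega>"
    by (rule tendsto_sandwich[OF _ _ tendsto_const lim]) (simp_all add: assms(3))
  with assms(1) show ?thesis by (simp add: J2_def)
qed

lemma q_norm_le_sup_norm:
  assumes "a \<in> linf_CX" "j \<in> J2 \<omega> \<Delta>"
  shows "q_norm \<omega> \<Delta> a \<le> sup_norm (\<lambda>n t. a n t + j n t)"
  unfolding q_norm_def
proof (rule cInf_lower)
  show "bdd_below {sup_norm (\<lambda>n t. a n t + j n t) |j. j \<in> J2 \<omega> \<Delta>}"
  proof (rule bdd_belowI, clarify)
    fix j' assume "j' \<in> J2 \<omega> \<Delta>"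
    then have "(\<lambda>n t. a n t + j' n t) \<in> linf_CX"
      using assms(1) by (intro linf_CX_add) (auto simp: J2_def)
    then show "0 \<le> sup_norm (\<lambda>n t. a n t + j' n t)"
      using norm_ge_zero sup_norm_upper order_trans by blast
  qed
qed (use assms(2) in blast)

lemma q_norm_lessE:
  assumes "q_norm \<omega> \<Delta> a < s"
  obtains j where "j \<in> J2 \<omega> \<Delta>" "sup_norm (\<lambda>n t. a n t + j n t) < s"
proof -
  have "{sup_norm (\<lambda>n t. a n t + j n t) |j. j \<in> J2 \<omega> \<Delta>} \<noteq> {}"
    using J2_zero by blast
  from cInf_lessD[OF this assms[unfolded q_norm_def]] that show ?thesis by blast
qed

lemma q_invertible_iff:
  "q_invertible \<omega> \<Delta> a \<longleftrightarrow> (\<exists>b\<in>linf_CX. (\<lambda>n t. a n t * b n t - 1) \<in> J2 \<omega> \<Delta>)"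
  by (simp add: q_invertible_def mult.commute)

lemma q_selfadjoint_of_real: "q_selfadjoint \<omega> \<Delta> (\<lambda>n t. complex_of_real (r n t))"
  by (simp add: q_selfadjoint_def J2_zero)

lemma Re_minus_in_J2:
  assumes "\<forall>\<mu>\<in>\<Delta>. borel_prob \<mu>" "x \<in> linf_CX" "q_selfadjoint \<omega> \<Delta> x"
  shows "(\<lambda>n t. complex_of_real (Re (x n t)) - x n t) \<in> J2 \<omega> \<Delta>"
proof (rule J2_dominated)
  obtain B where "\<And>n t. cmod (x n t) \<le> B"
    using assms(2) by (auto simp: linf_CX_def)
  moreover have "cmod (complex_of_real (Re z) - z) = \<bar>Im z\<bar>" for z
    by (simp add: norm_complex_def)
  ultimately have "cmod (complex_of_real (Re (x n t)) - x n t) \<le> B" for n t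
    by (metis abs_Im_le_cmod order_trans)
  then show "(\<lambda>n t. complex_of_real (Re (x n t)) - x n t) \<in> linf_CX"
    by (rule linf_CXI) (intro continuous_intros linf_CX_continuous assms(2))
  show "(\<lambda>n t. x n t - cnj (x n t)) \<in> J2 \<omega> \<Delta>"
    using assms(3) by (simp add: q_selfadjoint_def)
  fix n
  have eq: "(\<lambda>t. (cmod (complex_of_real (Re (x n t)) - x n t))\<^sup>2)
      = (\<lambda>t. 1/4 * (cmod (x n t - cnj (x n t)))\<^sup>2)"
    by (simp add: norm_complex_def complex_diff_cnj norm_mult power2_eq_square)
  have "tau_sup2 \<Delta> (\<lambda>t. complex_of_real (Re (x n t)) - x n t)
      = ennreal (1/4) * tau_sup2 \<Delta> (\<lambda>t. x n t - cnj (x n t))"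
    unfolding tau_sup2_eq_sup_integral eq
    by (rule sup_integral_cmult[OF assms(1)]) (intro continuous_intros linf_CX_continuous assms(2), simp)
  then show "tau_sup2 \<Delta> (\<lambda>t. complex_of_real (Re (x n t)) - x n t)
      \<le> ennreal (1/4) * tau_sup2 \<Delta> (\<lambda>t. x n t - cnj (x n t))"
    by simp
qed

lemma q_norm_diff_of_real_le:
  assumes "\<forall>\<mu>\<in>\<Delta>. borel_prob \<mu>" "x \<in> linf_CX" "q_selfadjoint \<omega> \<Delta> x"
    and "(\<lambda>n t. complex_of_real (r n t)) \<in> linf_CX" "\<And>n t. \<bar>r n t - Re (x n t)\<bar> \<le> e"
  shows "q_norm \<omega> \<Delta> (\<lambda>n t. x n t - complex_of_real (r n t)) \<le> e"
proof -
  let ?j = "\<lambda>n t. complex_of_real (Re (x n t)) - x n t"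
  have "q_norm \<omega> \<Delta> (\<lambda>n t. x n t - complex_of_real (r n t))
      \<le> sup_norm (\<lambda>n t. x n t - complex_of_real (r n t) + ?j n t)"
    using assms by (intro q_norm_le_sup_norm linf_CX_diff Re_minus_in_J2)
  also have "\<dots> \<le> e"
    using assms(5) by (intro sup_norm_least) (simp add: abs_minus_commute flip: of_real_diff)
  finally show ?thesis .
qed

lemma norm2_le_of_pointwise_le:
  assumes P: "\<forall>\<mu>\<in>\<Delta>. borel_prob \<mu>" and \<omega>: "free_ultrafilter \<omega>"
    and u: "\<And>n. continuous_on UNIV (u n)" and v: "v \<in> J2 \<omega> \<Delta>" and w: "w \<in> J2 \<omega> \<Delta>"
    and "0 \<le> p" "0 \<le> q" "0 \<le> r"
    and pointwise: "\<And>n t. (cmod (f n t))\<^sup>2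
      \<le> p * (cmod (u n t))\<^sup>2 + q * (cmod (v n t))\<^sup>2 + r * (cmod (w n t))\<^sup>2"
  shows "norm2 \<omega> \<Delta> f \<le> ennreal p * norm2 \<omega> \<Delta> u"
proof -
  have cont: "continuous_on UNIV (\<lambda>t. (cmod (u n t))\<^sup>2)" "continuous_on UNIV (\<lambda>t. (cmod (v n t))\<^sup>2)"
    "continuous_on UNIV (\<lambda>t. (cmod (w n t))\<^sup>2)" for n
    using v w by (intro continuous_intros linf_CX_continuous u; simp add: J2_def)+
  have tau: "tau_sup2 \<Delta> (f n) \<le> ennreal p * tau_sup2 \<Delta> (u n)
      + ennreal q * tau_sup2 \<Delta> (v n) + ennreal r * tau_sup2 \<Delta> (w n)" for n
  proof -
    let ?U = "\<lambda>t. p * (cmod (u n t))\<^sup>2"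
    let ?V = "\<lambda>t. q * (cmod (v n t))\<^sup>2"
    let ?W = "\<lambda>t. r * (cmod (w n t))\<^sup>2"
    have "tau_sup2 \<Delta> (f n) \<le> sup_integral \<Delta> (\<lambda>t. ?U t + ?V t + ?W t)"
      unfolding tau_sup2_eq_sup_integral using pointwise by (rule sup_integral_mono)
    also have "\<dots> \<le> sup_integral \<Delta> (\<lambda>t. ?U t + ?V t) + sup_integral \<Delta> ?W"
      using cont assms(6-8)
      by (intro sup_integral_add[OF P] continuous_on_add continuous_on_mult_left) auto
    also have "\<dots> \<le> sup_integral \<Delta> ?U + sup_integral \<Delta> ?V + sup_integral \<Delta> ?W"
      using cont assms(6-8)
      by (intro add_right_mono sup_integral_add[OF P] continuous_on_mult_left) auto
    also have "\<dots> = ennreal p * tau_sup2 \<Delta> (u n)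
        + ennreal q * tau_sup2 \<Delta> (v n) + ennreal r * tau_sup2 \<Delta> (w n)"
      unfolding tau_sup2_eq_sup_integral using cont assms(6-8) by (simp add: sup_integral_cmult[OF P])
    finally show ?thesis .
  qed
  have "((\<lambda>n. ennreal p * tau_sup2 \<Delta> (u n) + ennreal q * tau_sup2 \<Delta> (v n) + ennreal r * tau_sup2 \<Delta> (w n))
      \<longlongrightarrow> ennreal p * norm2 \<omega> \<Delta> u + ennreal q * 0 + ennreal r * 0) \<omega>"
    using v w unfolding J2_def by (intro tendsto_add ennreal_tendsto_cmult tendsto_norm2[OF \<omega>]) simp_all
  then have lim: "((\<lambda>n. ennreal p * tau_sup2 \<Delta> (u n) + ennreal q * tau_sup2 \<Delta> (v n)
      + ennreal r * tau_sup2 \<Delta> (w n)) \<longlongrightarrow> ennreal p * norm2 \<omega> \<Delta> u) \<omega>"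
    by simp
  show ?thesis
    using \<omega> tau by (intro tendsto_le[OF _ lim tendsto_norm2[OF \<omega>]] always_eventually allI)
      (simp_all add: free_ultrafilter_def)
qed

section \<open>Real rank zero implies density in the 2-norm\<close>

lemma power2_le_twice_sum_power2:
  fixes a b s :: real
  assumes "0 \<le> a" "a \<le> s + b"
  shows "a\<^sup>2 \<le> 2 * s\<^sup>2 + 2 * b\<^sup>2"
proof -
  have "a\<^sup>2 \<le> (s + b)\<^sup>2"
    using assms by (intro power_mono) auto
  also have "\<dots> \<le> 2 * s\<^sup>2 + 2 * b\<^sup>2"
    using zero_le_power2[of "s - b"] by (simp add: power2_eq_square algebra_simps)
  finally show ?thesis .
qed

lemma norm2_le_of_q_norm_less:
  assumes P: "\<forall>\<mu>\<in>\<Delta>. borel_prob \<mu>" and \<omega>: "free_ultrafilter \<omega>"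
    and a: "a \<in> linf_CX" and s: "q_norm \<omega> \<Delta> a < s"
  shows "norm2 \<omega> \<Delta> a \<le> ennreal (2 * s\<^sup>2)"
proof -
  obtain j where j: "j \<in> J2 \<omega> \<Delta>" and aj: "sup_norm (\<lambda>n t. a n t + j n t) < s"
    using s by (rule q_norm_lessE)
  have jl: "j \<in> linf_CX" using j by (simp add: J2_def)
  have bound: "cmod (a n t) \<le> s + cmod (j n t)" for n t
  proof -
    have "cmod (a n t) \<le> cmod (a n t + j n t) + cmod (j n t)"
      using norm_triangle_ineq4[of "a n t + j n t" "j n t"] by simp
    also have "cmod (a n t + j n t) \<le> sup_norm (\<lambda>n t. a n t + j n t)"
      using linf_CX_add[OF a jl] by (rule sup_norm_upper)
    finally show ?thesis using aj by simp
  qed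
  have pointwise: "(cmod (a n t))\<^sup>2 \<le> 2 * s\<^sup>2 + 2 * (cmod (j n t))\<^sup>2" for n t
    using norm_ge_zero bound by (rule power2_le_twice_sum_power2)
  have le: "tau_sup2 \<Delta> (a n) \<le> ennreal (2 * s\<^sup>2) + ennreal 2 * tau_sup2 \<Delta> (j n)" for n
  proof -
    have cj: "continuous_on UNIV (\<lambda>t. (cmod (j n t))\<^sup>2)"
      by (intro continuous_intros linf_CX_continuous jl)
    have "tau_sup2 \<Delta> (a n) \<le> sup_integral \<Delta> (\<lambda>t. 2 * s\<^sup>2 + 2 * (cmod (j n t))\<^sup>2)"
      unfolding tau_sup2_eq_sup_integral using pointwise by (rule sup_integral_mono)
    also have "\<dots> \<le> sup_integral \<Delta> (\<lambda>t. 2 * s\<^sup>2) + sup_integral \<Delta> (\<lambda>t. 2 * (cmod (j n t))\<^sup>2)"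
      using cj by (intro sup_integral_add[OF P] continuous_on_mult_left continuous_on_const) auto
    also have "sup_integral \<Delta> (\<lambda>t. 2 * (cmod (j n t))\<^sup>2) = ennreal 2 * tau_sup2 \<Delta> (j n)"
      unfolding tau_sup2_eq_sup_integral using cj by (rule sup_integral_cmult[OF P]) simp
    finally show ?thesis
      using sup_integral_const_le[OF P] by (meson add_right_mono order_trans)
  qed
  have "((\<lambda>n. ennreal (2 * s\<^sup>2) + ennreal 2 * tau_sup2 \<Delta> (j n))
      \<longlongrightarrow> ennreal (2 * s\<^sup>2) + ennreal 2 * 0) \<omega>"
    using j by (intro tendsto_add tendsto_const ennreal_tendsto_cmult) (simp_all add: J2_def)
  then have lim: "((\<lambda>n. ennreal (2 * s\<^sup>2) + ennreal 2 * tau_sup2 \<Delta> (j n))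
      \<longlongrightarrow> ennreal (2 * s\<^sup>2)) \<omega>"
    by simp
  show ?thesis
    using \<omega> le by (intro tendsto_le[OF _ lim tendsto_norm2[OF \<omega>]] always_eventually allI)
      (simp_all add: free_ultrafilter_def)
qed

lemma dense_norm2_if_real_rank_zero:
  assumes P: "\<forall>\<mu>\<in>\<Delta>. borel_prob \<mu>" and \<omega>: "free_ultrafilter \<omega>"
    and rr0: "q_real_rank_zero \<omega> \<Delta>"
  shows "q_sa_inv_dense_norm2 \<omega> \<Delta>"
  unfolding q_sa_inv_dense_norm2_def
proof (intro ballI impI allI)
  fix x and \<epsilon> :: ennreal
  assume x: "x \<in> linf_CX" "q_selfadjoint \<omega> \<Delta> x" and "0 < \<epsilon>"
  then obtain r where r: "0 < ennreal r" "ennreal r < \<epsilon>"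
    using ennreal_rat_dense by blast
  define s where "s = sqrt (r / 2)"
  have "0 < s" "2 * s\<^sup>2 = r"
    using r(1) by (simp_all add: s_def)
  then obtain y where y: "y \<in> linf_CX" "q_selfadjoint \<omega> \<Delta> y" "q_invertible \<omega> \<Delta> y"
    and xy: "q_norm \<omega> \<Delta> (\<lambda>n t. x n t - y n t) < s"
    using rr0 x unfolding q_real_rank_zero_def by blast
  have "norm2 \<omega> \<Delta> (\<lambda>n t. x n t - y n t) \<le> ennreal r"
    using norm2_le_of_q_norm_less[OF P \<omega> linf_CX_diff[OF x(1) y(1)] xy] \<open>2 * s\<^sup>2 = r\<close> by simp
  with r(2) y show "\<exists>y\<in>linf_CX. q_selfadjoint \<omega> \<Delta> y \<and> q_invertible \<omega> \<Delta> y
      \<and> norm2 \<omega> \<Delta> (\<lambda>n t. x n t - y n t) < \<epsilon>"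
    using le_less_trans by blast
qed

section \<open>Density in the 2-norm implies real rank zero\<close>

definition trunc_inverse :: "real \<Rightarrow> real \<Rightarrow> real" where
  "trunc_inverse c r = r / max (r\<^sup>2) (c\<^sup>2)"

lemma abs_trunc_inverse_le:
  assumes "0 < c"
  shows "\<bar>trunc_inverse c r\<bar> \<le> 1 / c"
proof -
  have "\<bar>r\<bar> * c \<le> max (r\<^sup>2) (c\<^sup>2)"
  proof (cases "c \<le> \<bar>r\<bar>")
    case True
    then have "\<bar>r\<bar> * c \<le> \<bar>r\<bar> * \<bar>r\<bar>" by (intro mult_left_mono) auto
    also have "\<dots> = r\<^sup>2" by (simp add: power2_eq_square abs_mult_self_eq)
    finally show ?thesis by simp
  next
    case False
    then have "\<bar>r\<bar> * c \<le> c * c" using assms by (simp add: mult_right_mono)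
    then show ?thesis by (simp add: power2_eq_square)
  qed
  moreover have "0 < max (r\<^sup>2) (c\<^sup>2)" using assms by (simp add: less_max_iff_disj)
  ultimately show ?thesis
    using assms by (simp add: trunc_inverse_def abs_divide field_simps)
qed

lemma mult_trunc_inverse:
  assumes "c \<le> \<bar>r\<bar>" "0 < c"
  shows "r * trunc_inverse c r = 1"
proof -
  have "c\<^sup>2 \<le> r\<^sup>2" using power_mono[OF assms(1), of 2] assms(2) by simp
  with assms show ?thesis by (simp add: trunc_inverse_def max_def power2_eq_square)
qed

lemma abs_mult_trunc_inverse_minus_one_le:
  assumes "0 < c"
  shows "\<bar>r * trunc_inverse c r - 1\<bar> \<le> 1"
proof -
  have "0 \<le> r * trunc_inverse c r" "r * trunc_inverse c r \<le> 1"
    using assms by (auto simp: trunc_inverse_def power2_eq_square[symmetric] field_simps max_def)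
  then show ?thesis by linarith
qed

lemma continuous_on_trunc_inverse [continuous_intros]:
  assumes "0 < c" "continuous_on S f"
  shows "continuous_on S (\<lambda>t. trunc_inverse c (f t))"
  unfolding trunc_inverse_def
  using assms by (intro continuous_intros) (auto simp: max_def)

lemma small_perturbation_alternatives:
  fixes x y b :: complex
  assumes "0 < \<delta>" "4 * \<delta> * cmod b \<le> 1"
    and small: "\<bar>Re x + e * max (-1) (min 1 (Re y / \<delta>))\<bar> < e / 2"
  shows "e / 2 \<le> cmod (x - y) \<or> 2 * \<delta> \<le> cmod (y - cnj y) \<or> 1 \<le> 2 * cmod (y * b - 1)"
proof -
  consider "\<delta> \<le> Re y" | "Re y \<le> - \<delta>" | "\<delta> \<le> \<bar>Im y\<bar>" | "\<bar>Re y\<bar> < \<delta>" "\<bar>Im y\<bar> < \<delta>"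
    by linarith
  then show ?thesis
  proof cases
    case 1
    then have "max (-1) (min 1 (Re y / \<delta>)) = 1" using assms(1) by simp
    then have "e / 2 \<le> \<bar>Re (x - y)\<bar>" using small 1 assms(1) by (simp add: abs_if split: if_splits)
    then show ?thesis using abs_Re_le_cmod order_trans by blast
  next
    case 2
    then have "max (-1) (min 1 (Re y / \<delta>)) = -1" using assms(1) by (simp add: field_simps)
    then have "e / 2 \<le> \<bar>Re (x - y)\<bar>" using small 2 assms(1) by (simp add: abs_if split: if_splits)
    then show ?thesis using abs_Re_le_cmod order_trans by blast
  next
    case 3
    then show ?thesis by (simp add: complex_diff_cnj norm_mult)
  next
    case 4
    then have "cmod y < 2 * \<delta>" using cmod_le[of y] by linarith
    have "cmod (y * b) = cmod y * cmod b" by (rule norm_mult)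
    also have "\<dots> \<le> 2 * \<delta> * cmod b"
      using \<open>cmod y < 2 * \<delta>\<close> by (intro mult_right_mono) auto
    also have "\<dots> \<le> 1 / 2" using assms(2) by simp
    finally have "cmod (y * b) \<le> 1 / 2" .
    then have "1 / 2 \<le> cmod (y * b - 1)"
      using norm_triangle_ineq3[of 1 "y * b"] by (simp add: norm_minus_commute)
    then show ?thesis by simp
  qed
qed

lemma one_le_power2_mult: "1 \<le> c * u \<Longrightarrow> 1 \<le> c\<^sup>2 * u\<^sup>2"
  for c u :: real
  by (metis one_le_power power_mult_distrib)

lemma perturbation_defect_le:
  fixes x y b :: complex
  assumes "0 < e" "0 < \<delta>" "4 * \<delta> * cmod b \<le> 1"
  defines "r \<equiv> Re x + e * max (-1) (min 1 (Re y / \<delta>))"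
  shows "(r * trunc_inverse (e/2) r - 1)\<^sup>2 \<le>
    (2/e)\<^sup>2 * (cmod (x - y))\<^sup>2 + (1/(2*\<delta>))\<^sup>2 * (cmod (y - cnj y))\<^sup>2 + 2\<^sup>2 * (cmod (y * b - 1))\<^sup>2"
    (is "_ \<le> ?rhs")
proof (cases "e / 2 \<le> \<bar>r\<bar>")
  case True
  then show ?thesis using assms(1) by (simp add: mult_trunc_inverse)
next
  case False
  then have "e / 2 \<le> cmod (x - y) \<or> 2 * \<delta> \<le> cmod (y - cnj y) \<or> 1 \<le> 2 * cmod (y * b - 1)"
    using small_perturbation_alternatives[OF assms(2,3)] unfolding r_def by simp
  then have "1 \<le> (2/e) * cmod (x - y) \<or> 1 \<le> (1/(2*\<delta>)) * cmod (y - cnj y) \<or> 1 \<le> 2 * cmod (y * b - 1)"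
    using assms(1,2) by (auto simp: field_simps)
  then have "1 \<le> ?rhs"
    using one_le_power2_mult[of "2/e" "cmod (x - y)"]
      one_le_power2_mult[of "1/(2*\<delta>)" "cmod (y - cnj y)"]
      one_le_power2_mult[of 2 "cmod (y * b - 1)"]
    by (smt (verit) zero_le_mult_iff zero_le_power2)
  moreover have "(r * trunc_inverse (e/2) r - 1)\<^sup>2 \<le> 1"
    using abs_mult_trunc_inverse_minus_one_le[of "e/2" r] assms(1) by (simp add: abs_square_le_1)
  ultimately show ?thesis by linarith
qed

lemma real_perturbation:
  fixes x y b :: "nat \<Rightarrow> 'a::topological_space \<Rightarrow> complex"
  assumes P: "\<forall>\<mu>\<in>\<Delta>. borel_prob \<mu>" and \<omega>: "free_ultrafilter \<omega>"
    and x: "x \<in> linf_CX" and y: "y \<in> linf_CX" and b: "b \<in> linf_CX"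
    and y_sa: "q_selfadjoint \<omega> \<Delta> y" and yb: "(\<lambda>n t. y n t * b n t - 1) \<in> J2 \<omega> \<Delta>"
    and "0 < e"
  obtains R :: "nat \<Rightarrow> 'a \<Rightarrow> real"
  where "\<And>n. continuous_on UNIV (R n)" "\<And>n t. \<bar>R n t - Re (x n t)\<bar> \<le> e"
    "norm2 \<omega> \<Delta> (\<lambda>n t. complex_of_real (R n t * trunc_inverse (e/2) (R n t)) - 1)
       \<le> ennreal ((2/e)\<^sup>2) * norm2 \<omega> \<Delta> (\<lambda>n t. x n t - y n t)"
proof -
  obtain B where B: "\<And>n t. cmod (b n t) \<le> B"
    using b unfolding linf_CX_def by blast
  define \<delta> where "\<delta> = 1 / (4 * max 1 B)"
  have "0 < \<delta>" by (simp add: \<delta>_def)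
  have b_small: "4 * \<delta> * cmod (b n t) \<le> 1" for n t
    using B[of n t] by (simp add: \<delta>_def field_simps)
  define R where "R n t = Re (x n t) + e * max (-1) (min 1 (Re (y n t) / \<delta>))" for n t
  have R_cont: "continuous_on UNIV (R n)" for n
    unfolding R_def using \<open>0 < \<delta>\<close> by (intro continuous_intros linf_CX_continuous x y) auto
  have R_close: "\<bar>R n t - Re (x n t)\<bar> \<le> e" for n t
    using \<open>0 < e\<close> by (simp add: R_def abs_mult)
  have defect_le: "(cmod (complex_of_real (R n t * trunc_inverse (e/2) (R n t)) - 1))\<^sup>2
      \<le> (2/e)\<^sup>2 * (cmod (x n t - y n t))\<^sup>2 + (1/(2*\<delta>))\<^sup>2 * (cmod (y n t - cnj (y n t)))\<^sup>2
        + 2\<^sup>2 * (cmod (y n t * b n t - 1))\<^sup>2" for n t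
  proof -
    have "(cmod (complex_of_real (R n t * trunc_inverse (e/2) (R n t)) - 1))\<^sup>2
        = (R n t * trunc_inverse (e/2) (R n t) - 1)\<^sup>2"
      by (metis norm_of_real of_real_1 of_real_diff power2_abs)
    also have "\<dots> \<le> (2/e)\<^sup>2 * (cmod (x n t - y n t))\<^sup>2 + (1/(2*\<delta>))\<^sup>2 * (cmod (y n t - cnj (y n t)))\<^sup>2
        + 2\<^sup>2 * (cmod (y n t * b n t - 1))\<^sup>2"
      unfolding R_def by (rule perturbation_defect_le[OF \<open>0 < e\<close> \<open>0 < \<delta>\<close> b_small])
    finally show ?thesis .
  qed
  have "(\<lambda>n t. y n t - cnj (y n t)) \<in> J2 \<omega> \<Delta>"
    using y_sa by (simp add: q_selfadjoint_def)
  moreover have "continuous_on UNIV (\<lambda>t. x n t - y n t)" for n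
    by (intro continuous_intros linf_CX_continuous x y)
  ultimately have "norm2 \<omega> \<Delta> (\<lambda>n t. complex_of_real (R n t * trunc_inverse (e/2) (R n t)) - 1)
       \<le> ennreal ((2/e)\<^sup>2) * norm2 \<omega> \<Delta> (\<lambda>n t. x n t - y n t)"
    using norm2_le_of_pointwise_le[OF P \<omega> _ _ yb _ _ _ defect_le] by simp
  with R_cont R_close show ?thesis by (rule that)
qed

lemma real_approx_with_small_defect:
  fixes x :: "nat \<Rightarrow> 'a::topological_space \<Rightarrow> complex"
  assumes P: "\<forall>\<mu>\<in>\<Delta>. borel_prob \<mu>" and \<omega>: "free_ultrafilter \<omega>"
    and dense: "q_sa_inv_dense_norm2 \<omega> \<Delta>"
    and x: "x \<in> linf_CX" "q_selfadjoint \<omega> \<Delta> x" and "0 < e" "0 < \<eta>"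
  obtains R :: "nat \<Rightarrow> 'a \<Rightarrow> real"
  where "\<And>n. continuous_on UNIV (R n)" "\<And>n t. \<bar>R n t - Re (x n t)\<bar> \<le> e"
    "eventually (\<lambda>n. tau_sup2 \<Delta> (\<lambda>t. complex_of_real (R n t * trunc_inverse (e/2) (R n t)) - 1)
       \<le> ennreal \<eta>) \<omega>"
proof -
  have "0 < ennreal ((e/2)\<^sup>2 * \<eta>)"
    using \<open>0 < e\<close> \<open>0 < \<eta>\<close> by simp
  then obtain y where y: "y \<in> linf_CX" "q_selfadjoint \<omega> \<Delta> y" "q_invertible \<omega> \<Delta> y"
    and xy: "norm2 \<omega> \<Delta> (\<lambda>n t. x n t - y n t) < ennreal ((e/2)\<^sup>2 * \<eta>)"
    using dense x unfolding q_sa_inv_dense_norm2_def by blast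
  obtain b where "b \<in> linf_CX" "(\<lambda>n t. y n t * b n t - 1) \<in> J2 \<omega> \<Delta>"
    using y(3) by (auto simp: q_invertible_iff)
  then obtain R :: "nat \<Rightarrow> 'a \<Rightarrow> real" where R: "\<And>n. continuous_on UNIV (R n)"
    "\<And>n t. \<bar>R n t - Re (x n t)\<bar> \<le> e"
    and defect: "norm2 \<omega> \<Delta> (\<lambda>n t. complex_of_real (R n t * trunc_inverse (e/2) (R n t)) - 1)
       \<le> ennreal ((2/e)\<^sup>2) * norm2 \<omega> \<Delta> (\<lambda>n t. x n t - y n t)"
    using real_perturbation[OF P \<omega> x(1) y(1) _ y(2) _ \<open>0 < e\<close>] by blast
  note defect
  also have "ennreal ((2/e)\<^sup>2) * norm2 \<omega> \<Delta> (\<lambda>n t. x n t - y n t)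
      < ennreal ((2/e)\<^sup>2) * ennreal ((e/2)\<^sup>2 * \<eta>)"
    using xy \<open>0 < e\<close> by (intro ennreal_mult_strict_left_mono) simp_all
  also have "\<dots> = ennreal \<eta>"
    using \<open>0 < e\<close> \<open>0 < \<eta>\<close> by (simp flip: ennreal_mult add: field_simps)
  finally have "eventually (\<lambda>n. tau_sup2 \<Delta> (\<lambda>t. complex_of_real (R n t * trunc_inverse (e/2) (R n t)) - 1)
       < ennreal \<eta>) \<omega>"
    by (rule order_tendstoD(2)[OF tendsto_norm2[OF \<omega>]])
  then have "eventually (\<lambda>n. tau_sup2 \<Delta> (\<lambda>t. complex_of_real (R n t * trunc_inverse (e/2) (R n t)) - 1)
       \<le> ennreal \<eta>) \<omega>"
    by (rule eventually_mono) (rule less_imp_le)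
  with R show ?thesis by (rule that)
qed

lemma real_approx_invertible:
  fixes R :: "nat \<Rightarrow> 'a::topological_space \<Rightarrow> real"
  assumes P: "\<forall>\<mu>\<in>\<Delta>. borel_prob \<mu>" and x: "x \<in> linf_CX" "q_selfadjoint \<omega> \<Delta> x" and "0 < e"
    and R_cont: "\<And>n. continuous_on UNIV (R n)" and R_close: "\<And>n t. \<bar>R n t - Re (x n t)\<bar> \<le> e"
    and defect: "((\<lambda>n. tau_sup2 \<Delta> (\<lambda>t. complex_of_real (R n t * trunc_inverse (e/2) (R n t)) - 1))
      \<longlongrightarrow> 0) \<omega>"
  shows "(\<lambda>n t. complex_of_real (R n t)) \<in> linf_CX"
    and "q_invertible \<omega> \<Delta> (\<lambda>n t. complex_of_real (R n t))"
    and "q_norm \<omega> \<Delta> (\<lambda>n t. x n t - complex_of_real (R n t)) \<le> e"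
proof -
  define y where "y n t = complex_of_real (R n t)" for n t
  define b where "b n t = complex_of_real (trunc_inverse (e/2) (R n t))" for n t
  obtain B where B: "\<And>n t. cmod (x n t) \<le> B"
    using x(1) unfolding linf_CX_def by blast
  have "cmod (y n t) \<le> B + e" for n t
    using R_close[of n t] abs_Re_le_cmod[of "x n t"] B[of n t] by (simp add: y_def)
  then show y_linf: "(\<lambda>n t. complex_of_real (R n t)) \<in> linf_CX"
    unfolding y_def by (rule linf_CXI) (simp add: continuous_on_of_real R_cont)
  have "cmod (b n t) \<le> 1 / (e/2)" for n t
    unfolding b_def norm_of_real using \<open>0 < e\<close> by (intro abs_trunc_inverse_le) simp
  then have b_linf: "b \<in> linf_CX"
    by (rule linf_CXI) (use \<open>0 < e\<close> in \<open>unfold b_def, intro continuous_intros R_cont, simp\<close>)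
  have yb_eq: "y n t * b n t - 1 = complex_of_real (R n t * trunc_inverse (e/2) (R n t) - 1)" for n t
    by (simp add: y_def b_def)
  have "cmod (y n t * b n t - 1) \<le> 1" for n t
    unfolding yb_eq norm_of_real using \<open>0 < e\<close> by (intro abs_mult_trunc_inverse_minus_one_le) simp
  then have "(\<lambda>n t. y n t * b n t - 1) \<in> linf_CX"
    by (rule linf_CXI) (intro continuous_intros linf_CX_continuous b_linf y_linf[folded y_def])
  then have "(\<lambda>n t. y n t * b n t - 1) \<in> J2 \<omega> \<Delta>"
    using defect by (simp add: J2_def y_def b_def)
  then show "q_invertible \<omega> \<Delta> (\<lambda>n t. complex_of_real (R n t))"
    using b_linf unfolding q_invertible_iff y_def by blast
  show "q_norm \<omega> \<Delta> (\<lambda>n t. x n t - complex_of_real (R n t)) \<le> e"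
    using P x y_linf R_close by (rule q_norm_diff_of_real_le)
qed

lemma real_rank_zero_if_dense_norm2:
  fixes \<Delta> :: "'a::topological_space measure set"
  assumes P: "\<forall>\<mu>\<in>\<Delta>. borel_prob \<mu>" and \<omega>: "free_ultrafilter \<omega>"
    and dense: "q_sa_inv_dense_norm2 \<omega> \<Delta>"
  shows "q_real_rank_zero \<omega> \<Delta>"
  unfolding q_real_rank_zero_def
proof (intro ballI impI allI)
  fix x and \<epsilon> :: real
  assume x: "x \<in> linf_CX" "q_selfadjoint \<omega> \<Delta> x" and "0 < \<epsilon>"
  define e where "e = \<epsilon> / 2"
  have "0 < e" using \<open>0 < \<epsilon>\<close> by (simp add: e_def)
  define defect where "defect R n = tau_sup2 \<Delta> (\<lambda>t. complex_of_real (R n t * trunc_inverse (e/2) (R n t)) - 1)"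
    for R :: "nat \<Rightarrow> 'a \<Rightarrow> real" and n
  have "\<exists>R. (\<forall>n. continuous_on UNIV (R n)) \<and> (\<forall>n t. \<bar>R n t - Re (x n t)\<bar> \<le> e)
      \<and> eventually (\<lambda>n. defect R n \<le> ennreal (inverse (real (Suc k)))) \<omega>" for k
  proof -
    obtain R where "\<And>n. continuous_on UNIV (R n)" "\<And>n t. \<bar>R n t - Re (x n t)\<bar> \<le> e"
      and "eventually (\<lambda>n. defect R n \<le> ennreal (inverse (real (Suc k)))) \<omega>"
      using real_approx_with_small_defect[OF P \<omega> dense x \<open>0 < e\<close>, of "inverse (real (Suc k))"]
      unfolding defect_def by auto
    then show ?thesis by blast
  qed
  then obtain R where R_cont: "\<And>k n. continuous_on UNIV (R k n)"
    and R_close: "\<And>k n t. \<bar>R k n t - Re (x n t)\<bar> \<le> e"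
    and R_defect: "\<And>k. eventually (\<lambda>n. defect (R k) n \<le> ennreal (inverse (real (Suc k)))) \<omega>"
    by metis
  have "(\<lambda>k. ennreal (inverse (real (Suc k)))) \<longlonglongrightarrow> 0"
    using tendsto_ennrealI[OF LIMSEQ_inverse_real_of_nat] by simp
  then obtain kk where "((\<lambda>n. defect (R (kk n)) n) \<longlongrightarrow> 0) \<omega>"
    using diagonal_tendsto_zero[where M="\<lambda>k. defect (R k)", OF free_ultrafilter_le_sequentially[OF \<omega>] _ R_defect]
    by blast
  then have "((\<lambda>n. tau_sup2 \<Delta> (\<lambda>t. complex_of_real (R (kk n) n t * trunc_inverse (e/2) (R (kk n) n t)) - 1))
      \<longlongrightarrow> 0) \<omega>"
    by (simp add: defect_def)
  note y = real_approx_invertible[where R="\<lambda>n. R (kk n) n", OF P x \<open>0 < e\<close> R_cont R_close this]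
  have "q_norm \<omega> \<Delta> (\<lambda>n t. x n t - complex_of_real (R (kk n) n t)) < \<epsilon>"
    using y(3) \<open>0 < \<epsilon>\<close> by (simp add: e_def)
  with y(1,2) q_selfadjoint_of_real[of \<omega> \<Delta> "\<lambda>n. R (kk n) n"]
  show "\<exists>y\<in>linf_CX. q_selfadjoint \<omega> \<Delta> y \<and> q_invertible \<omega> \<Delta> y
      \<and> q_norm \<omega> \<Delta> (\<lambda>n t. x n t - y n t) < \<epsilon>"
    by blast
qed

theorem corollary2p14:
  fixes \<omega> :: "nat filter" and \<Delta> :: "'a::metric_space measure set"
  assumes "compact (UNIV :: 'a set)"
    and "free_ultrafilter \<omega>"
    and "\<forall>\<mu>\<in>\<Delta>. borel_prob \<mu>"
    and "weak_star_closed \<Delta>"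
  shows "q_real_rank_zero \<omega> \<Delta> \<longleftrightarrow> q_sa_inv_dense_norm2 \<omega> \<Delta>"
  using dense_norm2_if_real_rank_zero[OF assms(3,2)] real_rank_zero_if_dense_norm2[OF assms(3,2)]
  by blast

end
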